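(* Let $h(x)=\max\{s_+x,0\}+\min\{s_-x,0\}$ with $s_+>0$, $s_-\ge0$, $s_+\ne s_-$, applied entrywise, and consider $$\ell\big((W_j,b_j)_{j=1}^2\big)=\tfrac12\big\|W_2\,h(W_1X+b_1\mathbf{1}_3^T)+b_2\mathbf{1}_3^T-Y\big\|_F^2,$$ with $W_1\in\mathbb{R}^{2\times 2}$, $b_1\in\mathbb{R}^2$, $W_2\in\mathbb{R}^{1\times 2}$, $b_2\in\mathbb{R}$, and $X=\begin{bmatrix}1&0&\tfrac12\\0&1&\tfrac12\end{bmatrix}$, $Y=\begin{bmatrix}0&0&1\end{bmatrix}$. Then there is a tuple of parameters with $b_1=0$, $b_2=0$ at which $\ell=0$, and there is a tuple $(\hat W_j,\hat b_j)_{j=1}^2$ with $\hat b_1=0$, $\hat b_2=0$ at which the network output equals the linear least squares output $\begin{bmatrix}\tfrac13&\tfrac13&\tfrac13\end{bmatrix}$, $\ell=\tfrac13$, and which is a local minimum of $\ell$.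
   Context: $\mathbf{1}_3$ is the all-ones column vector in $\mathbb{R}^3$; $\|\cdot\|_F$ is the Frobenius norm. *)

theory Defs
  imports "HOL-Analysis.Analysis"
begin

definition act :: "real \<Rightarrow> real \<Rightarrow> real \<Rightarrow> real" where
  "act sp sm x = max (sp * x) 0 + min (sm * x) 0"

definition frob_norm :: "real^'n^'m \<Rightarrow> real" where
  "frob_norm A = sqrt (\<Sum>i\<in>UNIV. \<Sum>j\<in>UNIV. (A $ i $ j)\<^sup>2)"

definition Xdata :: "real^3^2" where
  "Xdata = vector [vector [1, 0, 1/2], vector [0, 1, 1/2]]"

definition Ydata :: "real^3^1" where
  "Ydata = vector [vector [0, 0, 1]]"

definition net_out :: "real \<Rightarrow> real \<Rightarrow> real^2^2 \<Rightarrow> real^2 \<Rightarrow> real^2^1 \<Rightarrow> real \<Rightarrow> real^3^1" where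
  "net_out sp sm W1 b1 W2 b2 =
     W2 ** (\<chi> k j. act sp sm ((W1 ** Xdata) $ k $ j + b1 $ k)) + (\<chi> i j. b2)"

definition loss :: "real \<Rightarrow> real \<Rightarrow> ((real^2^2) \<times> (real^2) \<times> (real^2^1) \<times> real) \<Rightarrow> real" where
  "loss sp sm p =
     (1/2) * (frob_norm (net_out sp sm (fst p) (fst (snd p)) (fst (snd (snd p))) (snd (snd (snd p)))
                - Ydata))\<^sup>2"

end

theory Submission
  imports Defs
begin

text \<open>The third sample is the midpoint of the first two. Where all pre-activations are positive,
  h acts as multiplication by s_+, so the output row is an affine function of the samples and its
  third entry is the mean of the first two; against the target (0,0,1) such rows have residual at
  least 1/3, attained by the linear least squares output (1/3,1/3,1/3). Positivity of the
  pre-activations is an open condition, which makes that point a local minimum. Zero loss needs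
  the kink of h at 0: a hidden unit whose pre-activations change sign breaks the midpoint
  relation.\<close>

definition preact :: "real^2^2 \<Rightarrow> real^2 \<Rightarrow> 2 \<Rightarrow> 3 \<Rightarrow> real" where
  "preact W1 b1 k j = (W1 ** Xdata) $ k $ j + b1 $ k"

lemma preact_simps:
  "preact W1 b1 k 1 = W1$k$1 + b1$k"
  "preact W1 b1 k 2 = W1$k$2 + b1$k"
  "preact W1 b1 k 3 = W1$k$1/2 + W1$k$2/2 + b1$k"
  by (simp_all add: preact_def Xdata_def matrix_matrix_mult_def sum_2)

lemma net_out_nth:
  "net_out sp sm W1 b1 W2 b2 $ i $ j =
     W2$i$1 * act sp sm (preact W1 b1 1 j) + W2$i$2 * act sp sm (preact W1 b1 2 j) + b2"
  by (simp add: net_out_def preact_def matrix_matrix_mult_def sum_2)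

lemma loss_eq:
  fixes sp sm :: real and W1 :: "real^2^2" and b1 :: "real^2" and W2 :: "real^2^1" and b2 :: real
  defines "N \<equiv> net_out sp sm W1 b1 W2 b2"
  shows "loss sp sm (W1, b1, W2, b2) = (1/2) * ((N$1$1)\<^sup>2 + (N$1$2)\<^sup>2 + (N$1$3 - 1)\<^sup>2)"
proof -
  have "(frob_norm (N - Ydata))\<^sup>2 = (N$1$1)\<^sup>2 + (N$1$2)\<^sup>2 + (N$1$3 - 1)\<^sup>2"
    unfolding frob_norm_def
    by (subst real_sqrt_pow2) (simp_all add: sum_3 Ydata_def add_nonneg_nonneg)
  then show ?thesis by (simp add: loss_def N_def)
qed

lemma act_nonneg: "sp \<ge> 0 \<Longrightarrow> sm \<ge> 0 \<Longrightarrow> z \<ge> 0 \<Longrightarrow> act sp sm z = sp * z"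
  by (simp add: act_def)

lemma act_nonpos: "sp \<ge> 0 \<Longrightarrow> sm \<ge> 0 \<Longrightarrow> z \<le> 0 \<Longrightarrow> act sp sm z = sm * z"
  by (simp add: act_def mult_nonneg_nonpos)

lemma act_eq_0_iff: "sp > 0 \<Longrightarrow> sm > 0 \<Longrightarrow> act sp sm z = 0 \<longleftrightarrow> z = 0"
  by (cases "z \<ge> 0") (simp_all add: act_nonneg act_nonpos)

lemma loss_zero_relu:
  assumes "sp > 0"
  shows "loss sp 0 (vector [vector [1, 0], vector [1, -1]], 0, vector [vector [2/sp, -2/sp]], 0) = 0"
  using assms unfolding loss_eq net_out_nth preact_simps by (simp add: act_def)

text \<open>The first hidden unit vanishes on the third sample; the second is scaled so that the output
  weights cancel both units on the first two samples, and it is nonzero on the third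
  because s_+ \<noteq> s_-.\<close>
lemma loss_zero_leaky:
  assumes sp: "sp > 0" and sm: "sm > 0" and ne: "sp \<noteq> sm"
  defines "H \<equiv> act sp sm ((sm\<^sup>2 - sp\<^sup>2) / 2)"
  shows "loss sp sm (vector [vector [1, -1], vector [-(sp\<^sup>2), sm\<^sup>2]], 0,
                     vector [vector [sp * sm / H, 1 / H]], 0) = 0"
proof -
  have "sm\<^sup>2 \<noteq> sp\<^sup>2" using ne sp sm by (simp add: power2_eq_iff_nonneg)
  then have "H \<noteq> 0" using sp sm by (simp add: H_def act_eq_0_iff)
  moreover have "act sp sm 1 = sp" "act sp sm (-1) = -sm"
    "act sp sm (-(sp\<^sup>2)) = -(sm * sp\<^sup>2)" "act sp sm (sm\<^sup>2) = sp * sm\<^sup>2"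
    using sp sm by (simp_all add: act_nonneg act_nonpos)
  moreover have "act sp sm (-(sp\<^sup>2) / 2 + sm\<^sup>2 / 2) = H"
    by (simp add: H_def diff_divide_distrib)
  ultimately show ?thesis
    unfolding loss_eq net_out_nth preact_simps
    by (simp add: act_def[of _ _ 0] field_simps power2_eq_square)
qed

lemma exists_loss_zero:
  assumes "sp > 0" and "sm \<ge> 0" and "sp \<noteq> sm"
  shows "\<exists>W1 W2. loss sp sm (W1, 0, W2, 0) = 0"
proof (cases "sm = 0")
  case True
  then show ?thesis using loss_zero_relu[OF assms(1)] by blast
next
  case False
  then show ?thesis using loss_zero_leaky[OF assms(1) _ assms(3)] assms(2) by force
qed

lemma net_out_least_squares:
  assumes "sp > 0" and "sm \<ge> 0"
  shows "net_out sp sm (\<chi> i j. 1) 0 (\<chi> i j. 1 / (6 * sp)) 0 = vector [vector [1/3, 1/3, 1/3]]"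
  using assms
  by (auto simp: vec_eq_iff forall_3 net_out_nth preact_simps act_nonneg)

lemma net_out_midpoint:
  assumes "sp \<ge> 0" and "sm \<ge> 0" and "\<forall>k j. preact W1 b1 k j \<ge> 0"
  shows "net_out sp sm W1 b1 W2 b2 $ i $ 3 =
           (net_out sp sm W1 b1 W2 b2 $ i $ 1 + net_out sp sm W1 b1 W2 b2 $ i $ 2) / 2"
  using assms
  by (simp add: net_out_nth act_nonneg) (simp add: preact_simps field_simps)

lemma midpoint_residual_ge: "1/3 \<le> (1/2) * (a\<^sup>2 + b\<^sup>2 + ((a + b) / 2 - 1)\<^sup>2 :: real)"
proof -
  have "(1/2) * (a\<^sup>2 + b\<^sup>2 + ((a + b) / 2 - 1)\<^sup>2) - 1/3
          = (3/8) * (a + b - 2/3)\<^sup>2 + (1/4) * (a - b)\<^sup>2"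
    by (simp add: power2_eq_square field_simps)
  moreover have "0 \<le> (3/8) * (a + b - 2/3)\<^sup>2 + (1/4) * (a - b)\<^sup>2" by simp
  ultimately show ?thesis by linarith
qed

lemma loss_ge_least_squares:
  assumes "sp \<ge> 0" and "sm \<ge> 0" and "\<forall>k j. preact W1 b1 k j \<ge> 0"
  shows "1/3 \<le> loss sp sm (W1, b1, W2, b2)"
proof -
  define N where "N = net_out sp sm W1 b1 W2 b2"
  have "N$1$3 = (N$1$1 + N$1$2) / 2"
    unfolding N_def by (rule net_out_midpoint[OF assms])
  then have "loss sp sm (W1, b1, W2, b2) =
      (1/2) * ((N$1$1)\<^sup>2 + (N$1$2)\<^sup>2 + ((N$1$1 + N$1$2) / 2 - 1)\<^sup>2)"
    by (simp only: loss_eq N_def)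
  then show ?thesis using midpoint_residual_ge[of "N$1$1" "N$1$2"] by linarith
qed

lemma eventually_preact_pos:
  fixes r :: "'a::topological_space"
  assumes "\<forall>k j. preact W1 b1 k j > 0"
  shows "\<forall>\<^sub>F p in nhds (W1, b1, r). \<forall>k j. preact (fst p) (fst (snd p)) k j > 0"
proof -
  have "((\<lambda>p. preact (fst p) (fst (snd p)) k j)
          \<longlongrightarrow> preact (fst (W1, b1, r)) (fst (snd (W1, b1, r))) k j) (nhds (W1, b1, r))" for k j
    unfolding preact_def matrix_matrix_mult_def by (intro tendsto_intros filterlim_ident)
  then have "\<forall>\<^sub>F p in nhds (W1, b1, r). preact (fst p) (fst (snd p)) k j > 0" for k j
    using order_tendstoD(1) assms by fastforce
  then show ?thesis by (simp add: eventually_all_finite)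
qed

theorem mainTheorem4:
  fixes sp sm :: real
  assumes "sp > 0" and "sm \<ge> 0" and "sp \<noteq> sm"
  shows "(\<exists>W1 W2. loss sp sm (W1, 0, W2, 0) = 0) \<and>
         (\<exists>W1h W2h.
            net_out sp sm W1h 0 W2h 0 = vector [vector [1/3, 1/3, 1/3]] \<and>
            loss sp sm (W1h, 0, W2h, 0) = 1/3 \<and>
            (\<forall>\<^sub>F p in nhds (W1h, 0, W2h, 0). loss sp sm (W1h, 0, W2h, 0) \<le> loss sp sm p))"
proof -
  define W1h :: "real^2^2" where "W1h = (\<chi> i j. 1)"
  define W2h :: "real^2^1" where "W2h = (\<chi> i j. 1 / (6 * sp))"
  have out: "net_out sp sm W1h 0 W2h 0 = vector [vector [1/3, 1/3, 1/3]]"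
    unfolding W1h_def W2h_def using net_out_least_squares assms(1,2) .
  then have loss_at: "loss sp sm (W1h, 0, W2h, 0) = 1/3"
    by (simp add: loss_eq power2_eq_square)
  have "\<forall>\<^sub>F p in nhds (W1h, 0, W2h, 0). \<forall>k j. preact (fst p) (fst (snd p)) k j > 0"
    by (rule eventually_preact_pos) (simp add: W1h_def preact_simps forall_3)
  then have "\<forall>\<^sub>F p in nhds (W1h, 0, W2h, 0). loss sp sm (W1h, 0, W2h, 0) \<le> loss sp sm p"
  proof eventually_elim
    case (elim p)
    obtain W1 b1 W2 b2 where "p = (W1, b1, W2, b2)" by (metis prod.exhaust)
    with elim show ?case
      using loss_ge_least_squares assms(1,2) by (simp add: loss_at less_imp_le)
  qed
  then show ?thesis
    using exists_loss_zero[OF assms] out loss_at by blast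
qed

end
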